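(* Let $c\ge 1$ and $k\ge 1$ be integers and let $n$ satisfy $c+1\le n\le ck+1$. Consider the equivalence relation on $S_n$ generated by the replacement partition of $S_{c+1}$ whose only nontrivial part is $\{x\in S_{c+1}: x_1=1\}$. Then every $k$-squished permutation $w\in S_n$ is equivalent to the identity permutation.
   Context: Permutations are written in one-line notation as words. The order permutation (standardization) of a word $u$ of distinct positive integers of length $\ell$ is the unique $\pi\in S_\ell$ with $\pi_i<\pi_j$ iff $u_i<u_j$. The equivalence is generated by declaring $\phi\equiv\psi$ whenever $\phi=aub$ and $\psi=avb$ for words $a,b,u,v$ with $u,v$ of length $c+1$ whose order permutations both begin with $1$. A permutation of $S_n$ is $k$-squished if for each $j\le k$, the letter $j$ occurs among the first $c(j-1)+1$ positions. *)

theory Defs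
  imports Main
begin

definition perms :: "nat \<Rightarrow> nat list set" where
  "perms n = {w. distinct w \<and> set w = {1..n}}"

definition std :: "nat list \<Rightarrow> nat list" where
  "std u = map (\<lambda>x. card {y \<in> set u. y \<le> x}) u"

definition repl_step :: "nat \<Rightarrow> nat list \<Rightarrow> nat list \<Rightarrow> bool" where
  "repl_step c \<phi> \<psi> \<longleftrightarrow> (\<exists>a u v b. \<phi> = a @ u @ b \<and> \<psi> = a @ v @ b \<and>
      length u = c + 1 \<and> length v = c + 1 \<and> distinct u \<and> distinct v \<and>
      hd (std u) = 1 \<and> hd (std v) = 1)"

definition repl_equiv :: "nat \<Rightarrow> nat \<Rightarrow> nat list \<Rightarrow> nat list \<Rightarrow> bool" where
  "repl_equiv c n = (\<lambda>\<phi> \<psi>. \<phi> \<in> perms n \<and> \<psi> \<in> perms n \<and>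
      (symclp (\<lambda>x y. x \<in> perms n \<and> y \<in> perms n \<and> repl_step c x y))\<^sup>*\<^sup>* \<phi> \<psi>)"

definition id_perm :: "nat \<Rightarrow> nat list" where
  "id_perm n = [1..<n+1]"

definition squished :: "nat \<Rightarrow> nat \<Rightarrow> nat list \<Rightarrow> bool" where
  "squished c k w \<longleftrightarrow> (\<forall>j\<in>{1..k}. j \<in> set (take (c * (j - 1) + 1) w))"

end

theory Submission
  imports Defs "HOL-Library.Multiset"
begin

text \<open>A replacement freely rearranges the last \<open>c\<close> letters of any window of \<open>c+1\<close> consecutive
  positions whose first letter is the smallest in the window. Once the letters \<open>1, \<dots>, m\<close> stand
  in front, the letters in positions \<open>m+1, \<dots>, cm+1\<close> can be permuted arbitrarily. By induction
  on \<open>m\<close> it suffices to realise adjacent transpositions there: such a transposition lies in a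
  window pivoted at one of the letters \<open>1, \<dots>, m\<close>, unless it is too far to the right; then the
  statement for \<open>m-1\<close> carries the letter \<open>m\<close> forward to the start of a window covering the
  transposition, which is performed there before \<open>m\<close> is carried back. In a \<open>k\<close>-squished
  permutation with \<open>n \<le> ck+1\<close> every letter \<open>j\<close> lies among the first \<open>c(j-1)+1\<close> positions;
  this invariant survives moving the letter \<open>m+1\<close> forward to position \<open>m+1\<close>, so the
  permutation can be sorted letter by letter.\<close>

lemma le_mult_if_one_le: "1 \<le> c \<Longrightarrow> m \<le> c * (m::nat)"
  by (metis mult_1 mult_le_mono1)

lemma append_take_drop_take: "m \<le> L \<Longrightarrow> u = take m u @ drop m (take L u) @ drop L u"
  by (metis append.assoc append_take_drop_id min.absorb1 take_take)

lemma adjacent_swaps_move_to_front: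
  assumes "reflp R" and "transp R"
    and "\<And>p a b q. mset (p @ a # b # q) = mset (as @ y # bs) \<Longrightarrow>
      R (f (p @ a # b # q)) (f (p @ b # a # q))"
  shows "R (f (as @ y # bs)) (f (y # as @ bs))"
  using assms(3)
proof (induction as arbitrary: bs rule: rev_induct)
  case Nil
  show ?case
    using \<open>reflp R\<close> by (simp add: reflpD)
next
  case (snoc a as)
  have "R (f (as @ a # y # bs)) (f (as @ y # a # bs))"
    using snoc.prems by simp
  moreover have "R (f (as @ y # a # bs)) (f (y # as @ a # bs))"
    by (rule snoc.IH) (use snoc.prems in \<open>simp add: add_mset_commute\<close>)
  ultimately show ?case
    using \<open>transp R\<close> by (simp add: transpD)
qed

lemma adjacent_swaps_relate_permutations:
  assumes "reflp R" and "transp R"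
    and "\<And>p a b q. mset (p @ a # b # q) = mset ys \<Longrightarrow>
      R (f (p @ a # b # q)) (f (p @ b # a # q))"
    and "mset ys' = mset ys"
  shows "R (f ys) (f ys')"
  using assms(3,4)
proof (induction ys' arbitrary: f ys)
  case Nil
  then show ?case
    using \<open>reflp R\<close> by (simp add: reflpD)
next
  case (Cons y ys')
  have "y \<in> set ys"
    using Cons.prems(2) by (metis list.set_intros(1) set_mset_mset)
  then obtain as bs where ys: "ys = as @ y # bs"
    by (meson split_list)
  have "R (f ys) (f (y # as @ bs))"
    using adjacent_swaps_move_to_front[OF assms(1,2), of as y bs f] Cons.prems(1) ys by simp
  moreover have "R (f (y # as @ bs)) (f (y # ys'))"
  proof (rule Cons.IH[where f = "\<lambda>l. f (y # l)"])
    fix p a b q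
    assume "mset (p @ a # b # q) = mset (as @ bs)"
    then show "R (f (y # p @ a # b # q)) (f (y # p @ b # a # q))"
      using Cons.prems(1)[of "y # p"] ys by simp
  qed (use Cons.prems(2) ys in simp)
  ultimately show ?case
    using \<open>transp R\<close> by (meson transpD)
qed

definition swap_pos :: "'a list \<Rightarrow> nat \<Rightarrow> nat \<Rightarrow> 'a list" where
  "swap_pos xs i k = xs[i := xs ! k, k := xs ! i]"

lemma length_swap_pos [simp]: "length (swap_pos xs i k) = length xs"
  by (simp add: swap_pos_def)

lemma nth_swap_pos:
  "i < length xs \<Longrightarrow> k < length xs \<Longrightarrow>
    swap_pos xs i k ! t = (if t = k then xs ! i else if t = i then xs ! k else xs ! t)"
  by (simp add: swap_pos_def nth_list_update)

lemma swap_pos_append: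
  "swap_pos (us @ a # b # vs) (length us) (Suc (length us)) = us @ b # a # vs"
  by (simp add: swap_pos_def list_update_append nth_append)

definition repl_conn :: "nat \<Rightarrow> nat \<Rightarrow> nat list \<Rightarrow> nat list \<Rightarrow> bool" where
  "repl_conn c n = (symclp (\<lambda>x y. x \<in> perms n \<and> y \<in> perms n \<and> repl_step c x y))\<^sup>*\<^sup>*"

lemma repl_equiv_iff:
  "repl_equiv c n x y \<longleftrightarrow> x \<in> perms n \<and> y \<in> perms n \<and> repl_conn c n x y"
  by (simp add: repl_equiv_def repl_conn_def)

lemma reflp_repl_conn: "reflp (repl_conn c n)"
  unfolding repl_conn_def by (simp add: reflpI)

lemma transp_repl_conn: "transp (repl_conn c n)"
  unfolding repl_conn_def by (rule transp_rtranclp)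

lemma repl_conn_trans: "repl_conn c n x y \<Longrightarrow> repl_conn c n y z \<Longrightarrow> repl_conn c n x z"
  using transp_repl_conn by (rule transpD)

lemma repl_conn_sym: "repl_conn c n x y \<Longrightarrow> repl_conn c n y x"
  unfolding repl_conn_def by (rule rtranclp_symclp_sym)

lemma length_perms: "w \<in> perms n \<Longrightarrow> length w = n"
  unfolding perms_def using distinct_card by fastforce

lemma mset_perms_eq: "w \<in> perms n \<Longrightarrow> w' \<in> perms n \<Longrightarrow> mset w = mset w'"
proof -
  assume "w \<in> perms n" "w' \<in> perms n"
  then have "mset w = mset_set {1..n}" and "mset w' = mset_set {1..n}"
    by (auto simp: perms_def mset_set_set[symmetric])
  then show ?thesis by simp
qed

lemma perms_if_mset_eq: "w \<in> perms n \<Longrightarrow> mset w' = mset w \<Longrightarrow> w' \<in> perms n"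
  unfolding perms_def using mset_eq_imp_distinct_iff mset_eq_setD by blast

lemma swap_pos_in_perms:
  "w \<in> perms n \<Longrightarrow> i < n \<Longrightarrow> k < n \<Longrightarrow> swap_pos w i k \<in> perms n"
  using length_perms[of w n] by (simp add: perms_def swap_pos_def)

lemma id_perm_in_perms: "id_perm n \<in> perms n"
  by (simp add: id_perm_def perms_def atLeastLessThanSuc_atLeastAtMost del: upt_Suc)

lemma take_id_prefix:
  assumes "take m w = [1..<m+1]" and "m' \<le> m"
  shows "take m' w = [1..<m'+1]"
proof -
  have "take m' w = take m' [1..<m+1]"
    using assms by (metis min.absorb1 take_take)
  then show ?thesis
    using assms(2) by (simp add: take_upt del: upt_Suc)
qed

lemma nth_id_prefix:
  assumes "take m w = [1..<m+1]" and "t < m"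
  shows "w ! t = t + 1"
proof -
  have "w ! t = [1..<m+1] ! t"
    using assms by (metis nth_take)
  then show ?thesis
    using assms(2) by (simp del: upt_Suc)
qed

lemma id_prefix_less:
  assumes "w \<in> perms n" and "take m w = [1..<m+1]" and "m \<le> t" and "t < n"
  shows "m < w ! t"
proof (rule ccontr)
  assume "\<not> m < w ! t"
  moreover have "w ! t \<in> {1..n}"
    using assms(1,4) length_perms[OF assms(1)] nth_mem unfolding perms_def by blast
  ultimately have "w ! t - 1 < m" and "w ! (w ! t - 1) = w ! t"
    using nth_id_prefix[OF assms(2), of "w ! t - 1"] by auto
  moreover have "distinct w" and "t < length w"
    using assms length_perms[OF assms(1)] by (auto simp: perms_def)
  ultimately have "w ! t - 1 = t"
    using nth_eq_iff_index_eq assms(3) by (metis order.strict_trans order.strict_trans2)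
  then show False
    using \<open>w ! t - 1 < m\<close> assms(3) by simp
qed

lemma id_prefix_pivot:
  assumes "w \<in> perms n" and "take m w = [1..<m+1]" and "m \<le> s" and "w ! s = m + 1"
    and "s < t" and "t < n"
  shows "w ! s < w ! t"
proof -
  have "distinct w" and "length w = n"
    using assms(1) length_perms by (auto simp: perms_def)
  then have "w ! t \<noteq> w ! s"
    using assms(5,6) nth_eq_iff_index_eq by fastforce
  then show ?thesis
    using id_prefix_less[OF assms(1,2), of t] assms by simp
qed

lemma hd_std_eq_1: "distinct u \<Longrightarrow> u \<noteq> [] \<Longrightarrow> \<forall>x\<in>set u. hd u \<le> x \<Longrightarrow> hd (std u) = 1"
proof -
  assume "u \<noteq> []" "\<forall>x\<in>set u. hd u \<le> x"
  then have "{y \<in> set u. y \<le> hd u} = {hd u}"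
    by force
  then show ?thesis
    using \<open>u \<noteq> []\<close> by (simp add: std_def hd_map)
qed

lemma repl_conn_window:
  assumes "a @ u @ b \<in> perms n" and "a @ v @ b \<in> perms n"
    and "length u = c + 1" and "length v = c + 1"
    and "hd v = hd u" and "\<forall>x\<in>set u. hd u \<le> x"
  shows "repl_conn c n (a @ u @ b) (a @ v @ b)"
proof -
  have "distinct u" "distinct v"
    using assms(1,2) by (auto simp: perms_def)
  moreover have "set v = set u"
    using mset_perms_eq[OF assms(1,2)] by (metis mset_append add_left_cancel add_right_cancel set_mset_mset)
  moreover have "u \<noteq> []" "v \<noteq> []"
    using assms(3,4) by auto
  ultimately have "hd (std u) = 1" "hd (std v) = 1"
    using hd_std_eq_1 assms(5,6) by metis+
  then have "repl_step c (a @ u @ b) (a @ v @ b)"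
    unfolding repl_step_def using assms(3,4) \<open>distinct u\<close> \<open>distinct v\<close> by blast
  then show ?thesis
    unfolding repl_conn_def using assms(1,2) by (intro r_into_rtranclp) (simp add: symclp_def)
qed

lemma repl_conn_swap_in_window:
  assumes W: "W \<in> perms n" and "s + c < n"
    and pivot: "\<forall>t. s < t \<and> t \<le> s + c \<longrightarrow> W ! s < W ! t"
    and "s < i" and "i < k" and "k \<le> s + c"
  shows "repl_conn c n W (swap_pos W i k)"
proof -
  have len: "length W = n"
    using length_perms[OF W] .
  define a where "a = take s W"
  define u where "u = take (c + 1) (drop s W)"
  define b where "b = drop (s + c + 1) W"
  define v where "v = swap_pos u (i - s) (k - s)"
  have lu: "length u = c + 1" and la: "length a = s"
    using assms(2) len by (simp_all add: u_def a_def)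
  have nth_u: "u ! t = W ! (s + t)" if "t < c + 1" for t
    using that assms(2) len by (simp add: u_def)
  have W_split: "W = a @ u @ b"
    unfolding a_def u_def b_def by (metis add.commute append_take_drop_id drop_drop)
  have swap_split: "swap_pos W i k = a @ v @ b"
  proof -
    have "i - s < c + 1" "k - s < c + 1" "\<not> i < s" "\<not> k < s"
      using assms(4-6) by auto
    then show ?thesis
      using la lu unfolding W_split v_def swap_pos_def by (simp add: list_update_append nth_append)
  qed
  have hd_u: "hd u = W ! s"
    using lu nth_u[of 0] hd_conv_nth[of u] by fastforce
  have "hd v = hd u"
  proof -
    have "v ! 0 = u ! 0"
      using lu assms(4-6) by (simp add: v_def nth_swap_pos)
    moreover have "length v = c + 1"
      using lu by (simp add: v_def)
    then have "u \<noteq> []" "v \<noteq> []"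
      using lu by auto
    ultimately show ?thesis
      by (simp add: hd_conv_nth)
  qed
  moreover have "\<forall>x\<in>set u. hd u \<le> x"
  proof
    fix x
    assume "x \<in> set u"
    then obtain t where "t < c + 1" "x = W ! (s + t)"
      using lu nth_u by (auto simp: in_set_conv_nth)
    then show "hd u \<le> x"
      using pivot hd_u by (cases "t = 0") (auto intro: less_imp_le)
  qed
  moreover have "swap_pos W i k \<in> perms n"
    using swap_pos_in_perms[OF W] assms(2,5,6) by simp
  ultimately show ?thesis
    using repl_conn_window[of a u b n v c] W lu W_split swap_split by (simp add: v_def)
qed

lemma repl_conn_swap_after_pivot:
  assumes W: "W \<in> perms n" and "take m W = [1..<m+1]" and "m \<le> s" and "W ! s = m + 1"
    and "s + c < n" and "s < i" and "i < k" and "k \<le> s + c"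
  shows "repl_conn c n W (swap_pos W i k)"
proof (rule repl_conn_swap_in_window[OF W \<open>s + c < n\<close> _ assms(6-8)])
  show "\<forall>t. s < t \<and> t \<le> s + c \<longrightarrow> W ! s < W ! t"
    using id_prefix_pivot[OF W assms(2-4)] assms(5) by auto
qed

text \<open>Positions are counted from \<open>0\<close>: the freely permutable block is \<open>m, \<dots>, c*m\<close>.\<close>

definition rearrangeable :: "nat \<Rightarrow> nat \<Rightarrow> nat \<Rightarrow> bool" where
  "rearrangeable c n m \<longleftrightarrow> (\<forall>w\<in>perms n. \<forall>w'\<in>perms n.
      take m w = [1..<m+1] \<longrightarrow> take m w' = [1..<m+1] \<longrightarrow>
      drop (c * m + 1) w = drop (c * m + 1) w' \<longrightarrow> repl_conn c n w w')"

lemma rearrangeable_swap: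
  assumes "rearrangeable c n m" and W: "W \<in> perms n" and "take m W = [1..<m+1]"
    and "m \<le> i" and "i \<le> c * m" and "i < n"
    and "m \<le> k" and "k \<le> c * m" and "k < n"
  shows "repl_conn c n W (swap_pos W i k)"
proof -
  have "swap_pos W i k \<in> perms n"
    using swap_pos_in_perms[OF W] assms by simp
  moreover have "take m (swap_pos W i k) = [1..<m+1]"
    using assms(3,4,7) by (simp add: swap_pos_def)
  moreover have "drop (c * m + 1) (swap_pos W i k) = drop (c * m + 1) W"
    using assms(5,8) by (simp add: swap_pos_def)
  ultimately show ?thesis
    using assms(1-3) unfolding rearrangeable_def by metis
qed

lemma rearrangeable_if_adjacent_swaps:
  assumes "c \<ge> 1"
    and adjacent: "\<And>W i. W \<in> perms n \<Longrightarrow> take m W = [1..<m+1] \<Longrightarrow> m \<le> i \<Longrightarrow>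
      Suc i < min (c * m + 1) n \<Longrightarrow> repl_conn c n W (swap_pos W i (Suc i))"
  shows "rearrangeable c n m"
  unfolding rearrangeable_def
proof (intro ballI impI)
  fix w w'
  assume w: "w \<in> perms n" and w': "w' \<in> perms n"
    and pre: "take m w = [1..<m+1]" and pre': "take m w' = [1..<m+1]"
    and tail: "drop (c * m + 1) w = drop (c * m + 1) w'"
  define L where "L = c * m + 1"
  define xs where "xs = [1..<m+1]"
  define zs where "zs = drop L w"
  have "m \<le> L"
    unfolding L_def using le_mult_if_one_le[OF \<open>c \<ge> 1\<close>, of m] by linarith
  note split = append_take_drop_take[OF this]
  define ys where "ys = drop m (take L w)"
  define ys' where "ys' = drop m (take L w')"
  have w_split: "w = xs @ ys @ zs" and w'_split: "w' = xs @ ys' @ zs"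
    using split[of w] split[of w'] pre pre' tail by (simp_all add: xs_def ys_def ys'_def zs_def L_def)
  have "mset ys' = mset ys"
    using mset_perms_eq[OF w w'] w_split w'_split by simp
  have "length (take m w) = m"
    using pre by simp
  then have "m \<le> n"
    using length_perms[OF w] by simp
  then have length_ys: "m + length ys = min L n"
    using length_perms[OF w] \<open>m \<le> L\<close> by (simp add: ys_def)
  have "repl_conn c n (xs @ ys @ zs) (xs @ ys' @ zs)"
  proof (rule adjacent_swaps_relate_permutations[where f = "\<lambda>l. xs @ l @ zs",
        OF reflp_repl_conn transp_repl_conn _ \<open>mset ys' = mset ys\<close>])
    fix p a b q
    assume mset_eq: "mset (p @ a # b # q) = mset ys"
    define W where "W = xs @ (p @ a # b # q) @ zs"
    have "W \<in> perms n"
      using perms_if_mset_eq[OF w] mset_eq w_split by (simp add: W_def)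
    moreover have "take m W = [1..<m+1]"
      by (simp add: W_def xs_def del: upt_Suc)
    moreover have "Suc (m + length p) < min (c * m + 1) n"
      using length_ys mset_eq[THEN mset_eq_length] unfolding L_def by auto
    ultimately have "repl_conn c n W (swap_pos W (m + length p) (Suc (m + length p)))"
      by (intro adjacent) simp_all
    moreover have "swap_pos W (m + length p) (Suc (m + length p)) = xs @ (p @ b # a # q) @ zs"
      using swap_pos_append[of "xs @ p" a b "q @ zs"] by (simp add: W_def xs_def del: upt_Suc)
    ultimately show "repl_conn c n (xs @ (p @ a # b # q) @ zs) (xs @ (p @ b # a # q) @ zs)"
      by (simp add: W_def)
  qed
  then show "repl_conn c n w w'"
    using w_split w'_split by simp
qed

lemma repl_conn_adjacent_swap:
  assumes "c \<ge> 1" and "c + 1 \<le> n" and IH: "rearrangeable c n p"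
    and W: "W \<in> perms n" and pre: "take (Suc p) W = [1..<Suc p+1]"
    and "Suc p \<le> i" and "Suc i < n" and "Suc i \<le> c * Suc p"
  shows "repl_conn c n W (swap_pos W i (Suc i))"
proof -
  have len: "length W = n"
    using length_perms[OF W] .
  have pre_p: "take p W = [1..<p+1]"
    using take_id_prefix[OF pre] by simp
  define s where "s = min p (n - 1 - c)"
  show ?thesis
  proof (cases "Suc i \<le> s + c")
    case True
    have "take s W = [1..<s+1]" and "W ! s = s + 1" and "s + c < n" and "s < i"
      using take_id_prefix[OF pre] nth_id_prefix[OF pre] assms(2,6) by (simp_all add: s_def)
    with True show ?thesis
      using repl_conn_swap_after_pivot[OF W, of s s] by simp
  next
    case False
    txt \<open>The window pivoted at the letter \<open>p+1\<close> does not reach \<open>Suc i\<close>: carry that letter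
      forward to \<open>r\<close>, swap inside the window starting there, and carry it back.\<close>
    define r where "r = Suc i - c"
    have "s = p"
      using False assms(7) by (auto simp: s_def)
    then have "p < r" and "r + c = Suc i" and "r \<le> c * p"
      using False assms(8) by (auto simp: r_def)
    moreover have "c \<noteq> 1"
      using \<open>p < r\<close> \<open>r \<le> c * p\<close> by auto
    ultimately have r: "p < r" "r < i" "r \<le> c * p" "p \<le> c * p" "r + c = Suc i" "r + c < n"
      using assms(1,7) le_mult_if_one_le[OF assms(1), of p] by auto
    define u where "u = swap_pos W p r"
    have u: "u \<in> perms n"
      using swap_pos_in_perms[OF W] r by (simp add: u_def)
    have "take p u = [1..<p+1]" and "u ! r = p + 1"
      using pre_p nth_id_prefix[OF pre, of p] r len by (simp_all add: u_def swap_pos_def)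
    have "repl_conn c n W u"
      unfolding u_def using rearrangeable_swap[OF IH W pre_p] r by simp
    moreover have "repl_conn c n u (swap_pos u i (Suc i))"
      using repl_conn_swap_after_pivot[OF u \<open>take p u = [1..<p+1]\<close> _ \<open>u ! r = p + 1\<close>] r
      by simp
    moreover have "repl_conn c n (swap_pos W i (Suc i)) (swap_pos u i (Suc i))"
    proof -
      have "swap_pos u i (Suc i) = swap_pos (swap_pos W i (Suc i)) p r"
        using r len assms(7) by (intro nth_equalityI) (auto simp: u_def nth_swap_pos)
      moreover have "take p (swap_pos W i (Suc i)) = [1..<p+1]"
        using pre_p assms(6) by (simp add: swap_pos_def)
      ultimately show ?thesis
        using rearrangeable_swap[OF IH swap_pos_in_perms[OF W]] r assms(7) by simp
    qed
    ultimately show ?thesis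
      using repl_conn_trans repl_conn_sym by metis
  qed
qed

lemma rearrangeable_all:
  assumes "c \<ge> 1" and "c + 1 \<le> n"
  shows "rearrangeable c n m"
proof (induction m)
  case 0
  show ?case
    by (rule rearrangeable_if_adjacent_swaps[OF assms(1)]) simp
next
  case (Suc p)
  show ?case
    by (rule rearrangeable_if_adjacent_swaps[OF assms(1)])
      (use repl_conn_adjacent_swap[OF assms Suc.IH] in simp)
qed

lemma positions_bounded_swap_pos:
  assumes "c \<ge> 1" and w: "w \<in> perms n" and pre: "take m w = [1..<m+1]" and "m < n"
    and "t < n" and "w ! t = m + 1" and "t \<le> c * m"
    and bounded: "\<forall>i<n. i \<le> c * (w ! i - 1)"
  shows "\<forall>i<n. i \<le> c * (swap_pos w m t ! i - 1)"
proof (intro allI impI)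
  fix i
  assume "i < n"
  have "m \<le> w ! m - 1"
    using id_prefix_less[OF w pre order.refl \<open>m < n\<close>] by simp
  then have "t \<le> c * (w ! m - 1)"
    using \<open>t \<le> c * m\<close> mult_le_mono2 order_trans by blast
  moreover have "swap_pos w m t ! i = (if i = t then w ! m else if i = m then m + 1 else w ! i)"
    using nth_swap_pos[of m w t i] assms(4-6) length_perms[OF w] by simp
  ultimately show "i \<le> c * (swap_pos w m t ! i - 1)"
    using bounded \<open>i < n\<close> le_mult_if_one_le[OF assms(1), of m] by auto
qed

lemma repl_conn_id_perm_if_positions_bounded:
  assumes "c \<ge> 1" and "c + 1 \<le> n"
    and "w \<in> perms n" and "take m w = [1..<m+1]" and "m \<le> n"
    and "\<forall>i<n. i \<le> c * (w ! i - 1)"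
  shows "repl_conn c n w (id_perm n)"
  using assms(3-)
proof (induction "n - m" arbitrary: w m)
  case 0
  then have "w = id_perm n"
    using length_perms[of w n] by (simp add: id_perm_def)
  then show ?case
    by (simp add: repl_conn_def)
next
  case (Suc d)
  have w: "w \<in> perms n" and "m < n"
    using Suc by auto
  have "m + 1 \<in> set w"
    using w \<open>m < n\<close> by (simp add: perms_def)
  then obtain t where t: "t < n" "w ! t = m + 1"
    using length_perms[OF w] by (metis in_set_conv_nth)
  have "m \<le> t"
    using nth_id_prefix[OF Suc.prems(2), of t] t by (cases "t < m") auto
  moreover have "t \<le> c * m"
    using Suc.prems(4) t by fastforce
  moreover have "m \<le> c * m"
    using le_mult_if_one_le[OF assms(1)] .
  ultimately have "repl_conn c n w (swap_pos w m t)"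
    using rearrangeable_swap[OF rearrangeable_all[OF assms(1,2)] w Suc.prems(2)] t \<open>m < n\<close>
    by simp
  moreover have "repl_conn c n (swap_pos w m t) (id_perm n)"
  proof (rule Suc.hyps(1))
    show "d = n - Suc m" "Suc m \<le> n"
      using Suc.hyps(2) \<open>m < n\<close> by simp_all
    show "swap_pos w m t \<in> perms n"
      using swap_pos_in_perms[OF w \<open>m < n\<close> t(1)] .
    show "take (Suc m) (swap_pos w m t) = [1..<Suc m+1]"
      using Suc.prems(2) t \<open>m \<le> t\<close> length_perms[OF w]
      by (auto simp: swap_pos_def take_Suc_conv_app_nth nth_list_update)
    show "\<forall>i<n. i \<le> c * (swap_pos w m t ! i - 1)"
      using positions_bounded_swap_pos[OF assms(1) w Suc.prems(2) \<open>m < n\<close> t] Suc.prems(4)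
        \<open>t \<le> c * m\<close> by blast
  qed
  ultimately show ?case
    by (rule repl_conn_trans)
qed

lemma squished_positions_bounded:
  assumes "w \<in> perms n" and "squished c k w" and "n \<le> c * k + 1"
  shows "\<forall>i<n. i \<le> c * (w ! i - 1)"
proof (intro allI impI)
  fix i
  assume "i < n"
  have "distinct w" and "length w = n"
    using assms(1) length_perms by (auto simp: perms_def)
  have "w ! i \<in> {1..n}"
    using assms(1) \<open>i < n\<close> \<open>length w = n\<close> nth_mem unfolding perms_def by blast
  show "i \<le> c * (w ! i - 1)"
  proof (cases "w ! i \<le> k")
    case True
    then have "w ! i \<in> set (take (c * (w ! i - 1) + 1) w)"
      using assms(2) \<open>w ! i \<in> {1..n}\<close> unfolding squished_def by auto
    then obtain t where "t < c * (w ! i - 1) + 1" "t < n" "w ! t = w ! i"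
      using \<open>length w = n\<close> by (auto simp: in_set_conv_nth)
    then show ?thesis
      using \<open>distinct w\<close> \<open>length w = n\<close> \<open>i < n\<close> nth_eq_iff_index_eq by fastforce
  next
    case False
    then have "c * k \<le> c * (w ! i - 1)"
      by (intro mult_le_mono2) simp
    then show ?thesis
      using assms(3) \<open>i < n\<close> by linarith
  qed
qed

theorem lemma3p2:
  fixes c k n :: nat and w :: "nat list"
  assumes "c \<ge> 1" and "k \<ge> 1" and "c + 1 \<le> n" and "n \<le> c * k + 1"
    and "w \<in> perms n" and "squished c k w"
  shows "repl_equiv c n w (id_perm n)"
proof -
  have "\<forall>i<n. i \<le> c * (w ! i - 1)"
    using squished_positions_bounded assms(4-6) by blast
  then have "repl_conn c n w (id_perm n)"
    using repl_conn_id_perm_if_positions_bounded[OF assms(1,3,5), of 0] by simp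
  then show ?thesis
    using assms(5) id_perm_in_perms by (simp only: repl_equiv_iff)
qed

end
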